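(* Let $n \in \mathbb{N}$ and let $J \in \mathcal{B}(\mathbb{C}^n)$ be nilpotent. If $J = MN - NM$ for some $M, N \in \mathcal{B}(\mathbb{C}^n)$ with $M^2 = 0 = N^2$, then $J^{\lfloor (n+1)/2 \rfloor} = 0$. In particular, if $n \ge 4$ and $J_n$ denotes the $n \times n$ nilpotent Jordan cell, then $J_n$ is similar to $-J_n$ but $J_n$ is not of the form $MN - NM$ with $M^2 = 0 = N^2$. *)

theory Defs
  imports "Jordan_Normal_Form.Jordan_Normal_Form"
begin

definition nilpotent_mat :: "nat \<Rightarrow> complex mat \<Rightarrow> bool" where
  "nilpotent_mat n J \<longleftrightarrow> J \<in> carrier_mat n n \<and> (\<exists>k. J ^\<^sub>m k = 0\<^sub>m n n)"

end

theory Submission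
  imports Defs
begin

text \<open>
  Write \<open>J = M N + (- N) M\<close>. Since \<open>M\<^sup>2 = N\<^sup>2 = 0\<close>, the two summands annihilate each
  other from both sides, so \<open>J\<^sup>k = (M N)\<^sup>k + ((- N) M)\<^sup>k\<close> for \<open>k > 0\<close>; moreover
  \<open>J X = X\<^sup>2\<close> for either summand \<open>X\<close>, so both are nilpotent along with \<open>J\<close>.
  Everything thus reduces to: if \<open>M\<^sup>2 = N\<^sup>2 = 0\<close> and \<open>(M N)\<^sup>d \<noteq> 0 = (M N)\<^sup>d\<^sup>+\<^sup>1\<close>, then
  \<open>2 d < n\<close>. Choose \<open>(t, s)\<close> with \<open>((M N)\<^sup>d)\<^sub>t\<^sub>s \<noteq> 0\<close> and cut the alternating word
  \<open>(M N)\<^sup>d\<close> of length \<open>2 d\<close> into a prefix of length \<open>2 d - k\<close> and a suffix of length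
  \<open>k\<close>, for \<open>k = 0, \<dots>, 2 d\<close>. A shorter prefix times a longer suffix either is an
  alternating word of length \<open>> 2 d\<close>, hence contains \<open>(M N)\<^sup>d\<^sup>+\<^sup>1\<close>, or contains
  \<open>M M\<close> or \<open>N N\<close>. So the \<open>(t, s)\<close> entries of the products prefix times suffix form a
  triangular \<open>(2 d + 1) \<times> (2 d + 1)\<close> matrix with nonzero diagonal that factors
  through \<open>n\<close> dimensions, and \<open>2 d + 1 \<le> n\<close>.
  For the Jordan cell, \<open>J\<^sub>n\<^sup>k \<noteq> 0\<close> for \<open>k < n\<close>, and \<open>- J\<^sub>n\<close> is conjugate to \<open>J\<^sub>n\<close>
  by \<open>diag (1, -1, 1, \<dots>)\<close>.
\<close>

lemma pow_mat_add:
  fixes A :: "'a :: semiring_1 mat"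
  assumes A: "A \<in> carrier_mat n n"
  shows "A ^\<^sub>m (i + j) = A ^\<^sub>m i * A ^\<^sub>m j"
proof (induction j)
  case (Suc j)
  then show ?case using A by (simp add: assoc_mult_mat[of _ n n _ n _ n])
qed (use A in simp)

lemma pow_mat_Suc_left:
  fixes A :: "'a :: semiring_1 mat"
  assumes "A \<in> carrier_mat n n"
  shows "A ^\<^sub>m Suc k = A * A ^\<^sub>m k"
  using pow_mat_add[OF assms, of 1 k] assms by simp

lemma pow_mat_eq_zero_mono:
  fixes A :: "'a :: semiring_1 mat"
  assumes A: "A \<in> carrier_mat n n" and "A ^\<^sub>m i = 0\<^sub>m n n" and "i \<le> j"
  shows "A ^\<^sub>m j = 0\<^sub>m n n"
  using pow_mat_add[OF A, of i "j - i"] assms by simp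

lemma pow_mat_last_nonzero:
  fixes A :: "'a :: semiring_1 mat"
  assumes A: "A \<in> carrier_mat n n" and nilp: "A ^\<^sub>m q = 0\<^sub>m n n" and "A ^\<^sub>m k \<noteq> 0\<^sub>m n n"
  obtains d where "k \<le> d" "A ^\<^sub>m d \<noteq> 0\<^sub>m n n" "A ^\<^sub>m Suc d = 0\<^sub>m n n"
proof -
  define p where "p = (LEAST p. A ^\<^sub>m p = 0\<^sub>m n n)"
  have "A ^\<^sub>m p = 0\<^sub>m n n"
    unfolding p_def using nilp by (rule LeastI)
  moreover have "k < p"
    using pow_mat_eq_zero_mono[OF A \<open>A ^\<^sub>m p = 0\<^sub>m n n\<close>, of k] assms(3) by linarith
  moreover have "A ^\<^sub>m (p - 1) \<noteq> 0\<^sub>m n n"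
    using not_less_Least[of "p - 1" "\<lambda>p. A ^\<^sub>m p = 0\<^sub>m n n"] \<open>k < p\<close>
    unfolding p_def by simp
  ultimately show ?thesis
    using that[of "p - 1"] by (simp add: Suc_diff_1)
qed

lemma det_mult_nonzero_imp_le:
  fixes W V :: "'a :: idom mat"
  assumes W: "W \<in> carrier_mat m n" and V: "V \<in> carrier_mat n m" and det: "det (W * V) \<noteq> 0"
  shows "m \<le> n"
proof (rule ccontr)
  assume "\<not> m \<le> n"
  then have "n < m" by simp
  define W' where "W' = mat m m (\<lambda>(i, j). if j < n then W $$ (i, j) else 0)"
  define V' where "V' = mat m m (\<lambda>(i, j). if i < n then V $$ (i, j) else 0)"
  have W': "W' \<in> carrier_mat m m" and V': "V' \<in> carrier_mat m m"
    unfolding W'_def V'_def by auto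
  have "W' * V' = W * V"
  proof (rule eq_matI)
    fix i j assume "i < dim_row (W * V)" "j < dim_col (W * V)"
    then have i: "i < m" and j: "j < m" using W V by auto
    have "(W' * V') $$ (i, j) = (\<Sum>c<m. W' $$ (i, c) * V' $$ (c, j))"
      using i j W' V' by (simp add: scalar_prod_def lessThan_atLeast0)
    also have "\<dots> = (\<Sum>c<n. W $$ (i, c) * V $$ (c, j))"
      using \<open>n < m\<close> i j
      by (intro sum.mono_neutral_cong_right) (auto simp: W'_def V'_def)
    also have "\<dots> = (W * V) $$ (i, j)"
      using i j W V by (simp add: scalar_prod_def lessThan_atLeast0)
    finally show "(W' * V') $$ (i, j) = (W * V) $$ (i, j)" .
  qed (use W V W' V' in auto)
  moreover have "det W' = 0"
  proof -
    have "W' *\<^sub>v unit_vec m n = 0\<^sub>v m"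
      using \<open>n < m\<close> W' by (intro eq_vecI) (auto simp: W'_def)
    then show ?thesis
      using det_0_iff_vec_prod_zero[OF W'] \<open>n < m\<close> by (metis unit_vec_carrier unit_vec_nonzero)
  qed
  ultimately show False
    using det det_mult[OF W' V'] by simp
qed

lemma triangular_pairing_imp_le:
  fixes u v :: "nat \<Rightarrow> 'a :: idom vec"
  assumes u: "\<And>k. k < m \<Longrightarrow> u k \<in> carrier_vec n"
    and v: "\<And>l. l < m \<Longrightarrow> v l \<in> carrier_vec n"
    and diag: "\<And>k. k < m \<Longrightarrow> u k \<bullet> v k \<noteq> 0"
    and upper: "\<And>k l. k < l \<Longrightarrow> l < m \<Longrightarrow> u k \<bullet> v l = 0"
  shows "m \<le> n"
proof -
  define W where "W = mat_of_rows n (map u [0..<m])"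
  define V where "V = mat_of_cols n (map v [0..<m])"
  have W: "W \<in> carrier_mat m n" and V: "V \<in> carrier_mat n m"
    unfolding W_def V_def by auto
  have rows: "row W k = u k" if "k < m" for k
    using that u by (simp add: W_def)
  have cols: "col V l = v l" if "l < m" for l
    using that v by (simp add: V_def)
  have "det (W * V) = (\<Prod>k = 0..<m. u k \<bullet> v k)"
    using W V upper by (subst det_lower_triangular[of m]) (auto simp: rows cols prod_list_diag_prod)
  also have "\<dots> \<noteq> 0"
    using diag by simp
  finally show ?thesis
    using det_mult_nonzero_imp_le[OF W V] by blast
qed

lemma square_zero_pow_Suc_mult:
  fixes M N :: "'a :: semiring_1 mat"
  assumes M: "M \<in> carrier_mat n n" and N: "N \<in> carrier_mat n n" and NN: "N * N = 0\<^sub>m n n"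
  shows "(M * N) ^\<^sub>m Suc j * N = 0\<^sub>m n n"
proof -
  have "(M * N) ^\<^sub>m Suc j * N = (M * N) ^\<^sub>m j * M * (N * N)"
    using M N by (simp add: assoc_mult_mat[of _ n n _ n _ n])
  then show ?thesis
    using M NN by simp
qed

lemma square_zero_mult_pow_Suc:
  fixes M N :: "'a :: semiring_1 mat"
  assumes M: "M \<in> carrier_mat n n" and N: "N \<in> carrier_mat n n" and MM: "M * M = 0\<^sub>m n n"
  shows "M * (M * N) ^\<^sub>m Suc j = 0\<^sub>m n n"
proof -
  have "M * (M * N) ^\<^sub>m Suc j = M * M * (N * (M * N) ^\<^sub>m j)"
    unfolding pow_mat_Suc_left[OF mult_carrier_mat[OF M N]]
    using M N by (simp add: assoc_mult_mat[of _ n n _ n _ n])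
  then show ?thesis
    using M N MM by simp
qed

text \<open>\<open>alt_prefix M N a\<close> is the product \<open>M N M N \<dots>\<close> of \<open>a\<close> alternating factors
  starting with \<open>M\<close>; \<open>alt_suffix M N b\<close> is \<open>\<dots> M N M N\<close> with \<open>b\<close> factors ending with \<open>N\<close>.\<close>

definition alt_prefix :: "'a :: semiring_1 mat \<Rightarrow> 'a mat \<Rightarrow> nat \<Rightarrow> 'a mat" where
  "alt_prefix M N a = (if even a then (M * N) ^\<^sub>m (a div 2) else (M * N) ^\<^sub>m (a div 2) * M)"

definition alt_suffix :: "'a :: semiring_1 mat \<Rightarrow> 'a mat \<Rightarrow> nat \<Rightarrow> 'a mat" where
  "alt_suffix M N b = (if even b then (M * N) ^\<^sub>m (b div 2) else N * (M * N) ^\<^sub>m (b div 2))"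

lemma alt_prefix_carrier [simp]:
  "M \<in> carrier_mat n n \<Longrightarrow> N \<in> carrier_mat n n \<Longrightarrow> alt_prefix M N a \<in> carrier_mat n n"
  by (auto simp: alt_prefix_def intro!: mult_carrier_mat)

lemma alt_suffix_carrier [simp]:
  "M \<in> carrier_mat n n \<Longrightarrow> N \<in> carrier_mat n n \<Longrightarrow> alt_suffix M N b \<in> carrier_mat n n"
  by (simp add: alt_suffix_def)

lemma alt_prefix_mult_alt_suffix_even:
  fixes M N :: "'a :: semiring_1 mat"
  assumes M: "M \<in> carrier_mat n n" and N: "N \<in> carrier_mat n n" and "even (a + b)"
  shows "alt_prefix M N a * alt_suffix M N b = (M * N) ^\<^sub>m ((a + b) div 2)"
proof -
  have MN: "M * N \<in> carrier_mat n n"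
    using M N by simp
  show ?thesis
  proof (cases "even a")
    case True
    with assms show ?thesis
      by (simp add: alt_prefix_def alt_suffix_def pow_mat_add[OF MN] div_plus_div_distrib_dvd_left)
  next
    case False
    with assms have "odd b" and ab: "(a + b) div 2 = a div 2 + Suc (b div 2)"
      by presburger+
    have "alt_prefix M N a * alt_suffix M N b = (M * N) ^\<^sub>m (a div 2) * (M * N * (M * N) ^\<^sub>m (b div 2))"
      using False \<open>odd b\<close> M N by (simp add: alt_prefix_def alt_suffix_def assoc_mult_mat[of _ n n _ n _ n])
    also have "\<dots> = (M * N) ^\<^sub>m ((a + b) div 2)"
      unfolding pow_mat_Suc_left[OF MN, symmetric] pow_mat_add[OF MN, symmetric] ab ..
    finally show ?thesis .
  qed
qed

lemma alt_prefix_mult_alt_suffix_odd: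
  fixes M N :: "'a :: semiring_1 mat"
  assumes M: "M \<in> carrier_mat n n" and N: "N \<in> carrier_mat n n"
    and MM: "M * M = 0\<^sub>m n n" and NN: "N * N = 0\<^sub>m n n"
    and "odd (a + b)" and "0 < a" and "0 < b"
  shows "alt_prefix M N a * alt_suffix M N b = 0\<^sub>m n n"
proof (cases "even a")
  case True
  with assms have "odd b" and "a div 2 \<noteq> 0"
    by presburger+
  then obtain i where i: "a div 2 = Suc i"
    using not0_implies_Suc by blast
  have "alt_prefix M N a * alt_suffix M N b = (M * N) ^\<^sub>m Suc i * N * (M * N) ^\<^sub>m (b div 2)"
    using True \<open>odd b\<close> M N
    by (simp add: alt_prefix_def alt_suffix_def i assoc_mult_mat[of _ n n _ n _ n] del: pow_mat.simps(2))
  then show ?thesis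
    using M N by (simp add: square_zero_pow_Suc_mult[OF M N NN] del: pow_mat.simps(2))
next
  case False
  with assms have "even b" and "b div 2 \<noteq> 0"
    by presburger+
  then obtain j where j: "b div 2 = Suc j"
    using not0_implies_Suc by blast
  have "alt_prefix M N a * alt_suffix M N b = (M * N) ^\<^sub>m (a div 2) * (M * (M * N) ^\<^sub>m Suc j)"
    using False \<open>even b\<close> M N
    by (simp add: alt_prefix_def alt_suffix_def j assoc_mult_mat[of _ n n _ n _ n] del: pow_mat.simps(2))
  then show ?thesis
    using M N by (simp add: square_zero_mult_pow_Suc[OF M N MM] del: pow_mat.simps(2))
qed

lemma square_zero_product_index_bound:
  fixes M N :: "'a :: idom mat"
  assumes M: "M \<in> carrier_mat n n" and N: "N \<in> carrier_mat n n"
    and MM: "M * M = 0\<^sub>m n n" and NN: "N * N = 0\<^sub>m n n"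
    and nonzero: "(M * N) ^\<^sub>m d \<noteq> 0\<^sub>m n n" and zero: "(M * N) ^\<^sub>m Suc d = 0\<^sub>m n n"
  shows "2 * d < n"
proof -
  have MN: "M * N \<in> carrier_mat n n"
    using M N by simp
  obtain t s where t: "t < n" and s: "s < n" and ts: "((M * N) ^\<^sub>m d) $$ (t, s) \<noteq> 0"
  proof -
    have "\<exists>t<n. \<exists>s<n. ((M * N) ^\<^sub>m d) $$ (t, s) \<noteq> 0"
    proof (rule ccontr)
      assume "\<not> ?thesis"
      then have "(M * N) ^\<^sub>m d = 0\<^sub>m n n"
        using MN by (intro eq_matI) auto
      with nonzero show False ..
    qed
    with that show ?thesis by blast
  qed
  define Q where "Q k = alt_prefix M N (2 * d - k)" for k
  define P where "P l = alt_suffix M N l" for l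
  have Q: "Q k \<in> carrier_mat n n" and P: "P l \<in> carrier_mat n n" for k l
    using M N by (simp_all add: P_def Q_def)
  have pairing: "row (Q k) t \<bullet> col (P l) s = (Q k * P l) $$ (t, s)" for k l
    using carrier_matD[OF Q] carrier_matD[OF P] t s by simp
  have diag: "Q k * P k = (M * N) ^\<^sub>m d" if "k \<le> 2 * d" for k
    using that alt_prefix_mult_alt_suffix_even[OF M N, of "2 * d - k" k] by (simp add: P_def Q_def)
  have upper: "Q k * P l = 0\<^sub>m n n" if "k < l" "l \<le> 2 * d" for k l
  proof (cases "even (2 * d - k + l)")
    case True
    with that have "Suc d \<le> (2 * d - k + l) div 2"
      by presburger
    then show ?thesis
      using alt_prefix_mult_alt_suffix_even[OF M N True] pow_mat_eq_zero_mono[OF MN zero]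
      by (simp add: P_def Q_def)
  next
    case False
    then show ?thesis
      using that alt_prefix_mult_alt_suffix_odd[OF M N MM NN False] by (simp add: P_def Q_def)
  qed
  have "Suc (2 * d) \<le> n"
    by (rule triangular_pairing_imp_le[of _ "\<lambda>k. row (Q k) t" _ "\<lambda>l. col (P l) s"])
      (use P Q t s ts in \<open>auto simp: pairing diag upper\<close>)
  then show ?thesis
    by simp
qed

lemma square_zero_product_pow_half:
  fixes M N :: "'a :: idom mat"
  assumes M: "M \<in> carrier_mat n n" and N: "N \<in> carrier_mat n n"
    and MM: "M * M = 0\<^sub>m n n" and NN: "N * N = 0\<^sub>m n n"
    and nilpotent: "(M * N) ^\<^sub>m q = 0\<^sub>m n n"
  shows "(M * N) ^\<^sub>m ((n + 1) div 2) = 0\<^sub>m n n"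
proof (rule ccontr)
  assume "(M * N) ^\<^sub>m ((n + 1) div 2) \<noteq> 0\<^sub>m n n"
  then obtain d where "(n + 1) div 2 \<le> d" and "2 * d < n"
    using pow_mat_last_nonzero[OF mult_carrier_mat[OF M N] nilpotent]
      square_zero_product_index_bound[OF M N MM NN] by metis
  then show False
    by linarith
qed

lemma pow_mat_Suc_eq_pow_mult:
  fixes J X :: "'a :: semiring_1 mat"
  assumes J: "J \<in> carrier_mat n n" and X: "X \<in> carrier_mat n n" and JX: "J * X = X * X"
  shows "X ^\<^sub>m Suc q = J ^\<^sub>m q * X"
proof (induction q)
  case (Suc q)
  have "X ^\<^sub>m Suc (Suc q) = J ^\<^sub>m q * (X * X)"
    using Suc J X by (simp add: assoc_mult_mat[of _ n n _ n _ n])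
  also have "\<dots> = J ^\<^sub>m Suc q * X"
    using J X by (simp add: JX[symmetric] assoc_mult_mat[of _ n n _ n _ n])
  finally show ?case .
qed (use J X in simp)

lemma pow_mat_Suc_add_orthogonal:
  fixes A K :: "'a :: semiring_1 mat"
  assumes A: "A \<in> carrier_mat n n" and K: "K \<in> carrier_mat n n"
    and AK: "A * K = 0\<^sub>m n n" and KA: "K * A = 0\<^sub>m n n"
  shows "(A + K) ^\<^sub>m Suc j = A ^\<^sub>m Suc j + K ^\<^sub>m Suc j"
proof (induction j)
  case (Suc j)
  have AjK: "A ^\<^sub>m Suc j * K = 0\<^sub>m n n" and KjA: "K ^\<^sub>m Suc j * A = 0\<^sub>m n n"
    using A K AK KA by (simp_all add: assoc_mult_mat[of _ n n _ n _ n])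
  have "(A + K) ^\<^sub>m Suc (Suc j) = (A ^\<^sub>m Suc j + K ^\<^sub>m Suc j) * (A + K)"
    using Suc by simp
  also have "\<dots> = A ^\<^sub>m Suc j * A + K ^\<^sub>m Suc j * A + (A ^\<^sub>m Suc j * K + K ^\<^sub>m Suc j * K)"
    using A K by (simp only: add_mult_distrib_mat[of _ n n] mult_add_distrib_mat[of _ n n]
        pow_carrier_mat add_carrier_mat)
  also have "\<dots> = A ^\<^sub>m Suc (Suc j) + K ^\<^sub>m Suc (Suc j)"
    unfolding AjK KjA pow_mat.simps(2)[symmetric] using A K by (simp del: pow_mat.simps(2))
  finally show ?case .
qed simp

lemma square_zero_commutator_pow_half:
  fixes J M N :: "'a :: idom mat"
  assumes M: "M \<in> carrier_mat n n" and N: "N \<in> carrier_mat n n"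
    and MM: "M * M = 0\<^sub>m n n" and NN: "N * N = 0\<^sub>m n n"
    and J: "J = M * N - N * M" and nilpotent: "J ^\<^sub>m q = 0\<^sub>m n n"
  shows "J ^\<^sub>m ((n + 1) div 2) = 0\<^sub>m n n"
proof -
  define A where "A = M * N"
  define K where "K = (- N) * M"
  have A: "A \<in> carrier_mat n n" and K: "K \<in> carrier_mat n n"
    using M N by (simp_all add: A_def K_def)
  have JAK: "J = A + K"
    using M N by (intro eq_matI) (auto simp: J A_def K_def)
  have "A * K = - (M * (N * N) * M)" and "K * A = - (N * (M * M) * N)"
    using M N by (simp_all add: A_def K_def assoc_mult_mat[of _ n n _ n _ n])
  moreover have "- 0\<^sub>m n n = (0\<^sub>m n n :: 'a mat)"
    by (intro eq_matI) auto
  ultimately have AK: "A * K = 0\<^sub>m n n" and KA: "K * A = 0\<^sub>m n n"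
    using M N MM NN by simp_all
  have "J * A = A * A" and "J * K = K * K"
    using A K AK KA by (simp_all add: JAK add_mult_distrib_mat[of _ n n])
  then have Aq: "A ^\<^sub>m Suc q = 0\<^sub>m n n" and Kq: "K ^\<^sub>m Suc q = 0\<^sub>m n n"
    using pow_mat_Suc_eq_pow_mult[of J n] A K by (simp_all add: JAK nilpotent[unfolded JAK])
  have "- N \<in> carrier_mat n n" and "(- N) * (- N) = 0\<^sub>m n n"
    using N NN by simp_all
  then have "A ^\<^sub>m ((n + 1) div 2) = 0\<^sub>m n n" and "K ^\<^sub>m ((n + 1) div 2) = 0\<^sub>m n n"
    using square_zero_product_pow_half[OF M N MM NN Aq[unfolded A_def]]
      square_zero_product_pow_half[OF _ M _ MM Kq[unfolded K_def]]
    by (simp_all add: A_def K_def)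
  moreover have "0 < (n + 1) div 2 \<or> n = 0"
    by linarith
  ultimately show ?thesis
    using pow_mat_Suc_add_orthogonal[OF A K AK KA] JAK M N
    by (auto simp: J gr0_conv_Suc intro!: eq_matI)
qed

lemma jordan_block_zero_pow_eq_zero_iff:
  "jordan_block n (0 :: 'a :: field) ^\<^sub>m k = 0\<^sub>m n n \<longleftrightarrow> n \<le> k"
proof
  assume zero: "jordan_block n (0 :: 'a) ^\<^sub>m k = 0\<^sub>m n n"
  show "n \<le> k"
  proof (rule ccontr)
    assume "\<not> n \<le> k"
    then show False
      using arg_cong[OF zero, of "\<lambda>B. B $$ (0, k)"] by (simp add: jordan_block_zero_pow)
  qed
qed (auto simp: jordan_block_zero_pow intro!: eq_matI)

lemma similar_mat_uminus_jordan_block: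
  "similar_mat (- jordan_block n a) (jordan_block n (- a :: 'a :: field))"
proof -
  have "similar_mat ((- 1) \<cdot>\<^sub>m jordan_block n a) (jordan_block n (- 1 * a))"
    by (intro similar_mat_jordan_block_smult similar_mat_refl) auto
  moreover have "(- 1) \<cdot>\<^sub>m jordan_block n a = - jordan_block n a"
    by (intro eq_matI) auto
  ultimately show ?thesis
    by simp
qed

theorem corollary3p04:
  fixes n :: nat
  shows "(\<forall>J M N :: complex mat.
            nilpotent_mat n J \<and> M \<in> carrier_mat n n \<and> N \<in> carrier_mat n n \<and>
            M * M = 0\<^sub>m n n \<and> N * N = 0\<^sub>m n n \<and> J = M * N - N * M
            \<longrightarrow> J ^\<^sub>m ((n + 1) div 2) = 0\<^sub>m n n)
       \<and> (n \<ge> 4 \<longrightarrow>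
            similar_mat (jordan_block n (0::complex)) (- jordan_block n 0) \<and>
            \<not> (\<exists>M N :: complex mat. M \<in> carrier_mat n n \<and> N \<in> carrier_mat n n \<and>
                 M * M = 0\<^sub>m n n \<and> N * N = 0\<^sub>m n n \<and>
                 jordan_block n 0 = M * N - N * M))"
proof (intro conjI allI impI notI)
  fix J M N :: "complex mat"
  assume hyps: "nilpotent_mat n J \<and> M \<in> carrier_mat n n \<and> N \<in> carrier_mat n n \<and>
    M * M = 0\<^sub>m n n \<and> N * N = 0\<^sub>m n n \<and> J = M * N - N * M"
  then obtain q where "J ^\<^sub>m q = 0\<^sub>m n n"
    unfolding nilpotent_mat_def by blast
  with hyps show "J ^\<^sub>m ((n + 1) div 2) = 0\<^sub>m n n"
    using square_zero_commutator_pow_half[of M n N J q] by blast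
next
  show "similar_mat (jordan_block n (0::complex)) (- jordan_block n 0)"
    using similar_mat_sym[OF similar_mat_uminus_jordan_block[of n 0]] by simp
next
  assume "4 \<le> n"
    and "\<exists>M N :: complex mat. M \<in> carrier_mat n n \<and> N \<in> carrier_mat n n \<and>
      M * M = 0\<^sub>m n n \<and> N * N = 0\<^sub>m n n \<and> jordan_block n 0 = M * N - N * M"
  then obtain M N :: "complex mat" where square_zero: "M \<in> carrier_mat n n" "N \<in> carrier_mat n n"
    "M * M = 0\<^sub>m n n" "N * N = 0\<^sub>m n n" and "jordan_block n 0 = M * N - N * M"
    by blast
  then have "jordan_block n (0 :: complex) ^\<^sub>m ((n + 1) div 2) = 0\<^sub>m n n"
    using square_zero_commutator_pow_half[OF square_zero] jordan_block_zero_pow_eq_zero_iff[of n n]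
    by blast
  with \<open>4 \<le> n\<close> show False
    by (simp add: jordan_block_zero_pow_eq_zero_iff)
qed

end
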